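(* Let $N\ge1$, $\alpha_1,\dots,\alpha_N\ge0$, let $b_1,\dots,b_N>0$ be pairwise distinct, set $\alpha=\sum_j\alpha_j$ and $$K(t)=\sum_{j=1}^N\alpha_jK_j(t),\qquad K_j(t)=\sum_{i=1}^jb_i\psi_i^je^{-b_it},\qquad \psi_i^j=\prod_{k=1,k\neq i}^j\frac{b_k}{b_k-b_i}.$$ Let $u$ be the solution of $\dot u(t)=-\alpha u(t)+\int_0^tK(t-s)u(s)\,ds$, $u(0)=u_0$. Then there is an $(N+1)\times(N+1)$ Markov generator $A$ and an initial vector $p(0)$ such that the solution $p$ of $\dot p=A^*p$ satisfies $p_0(t)=u(t)$ for all $t\ge0$; specifically one may take $A^*$ to be the matrix with first row $(-\alpha,b_1,0,\dots,0)$ and, for $j=1,\dots,N$, row $j$ having entry $\alpha_j$ in column $0$, $-b_j$ on the diagonal and $b_{j+1}$ in column $j+1$ (if $j<N$), zeros elsewhere, and $p(0)=(u_0,0,\dots,0)$.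
   Context: A Markov generator on $\mathbb{R}^{N+1}$ is a real matrix with nonnegative off-diagonal entries and zero row sums; $A^*$ denotes its transpose. Components of $p$ are indexed $p=(p_0,p_1,\dots,p_N)$. *)

theory Defs
  imports "HOL-Analysis.Analysis"
begin

text \<open>Vectors in R^(N+1) and (N+1)x(N+1) matrices are represented as functions
  on natural-number indices, with only indices 0..N being relevant.\<close>

definition markov_generator :: "nat \<Rightarrow> (nat \<Rightarrow> nat \<Rightarrow> real) \<Rightarrow> bool" where
  "markov_generator N A \<longleftrightarrow>
     (\<forall>i\<le>N. \<forall>j\<le>N. i \<noteq> j \<longrightarrow> 0 \<le> A i j) \<and> (\<forall>i\<le>N. (\<Sum>j\<le>N. A i j) = 0)"

definition psi :: "(nat \<Rightarrow> real) \<Rightarrow> nat \<Rightarrow> nat \<Rightarrow> real" where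
  "psi b i j = (\<Prod>k\<in>{1..j} - {i}. b k / (b k - b i))"

definition Kj :: "(nat \<Rightarrow> real) \<Rightarrow> nat \<Rightarrow> real \<Rightarrow> real" where
  "Kj b j t = (\<Sum>i=1..j. b i * psi b i j * exp (- b i * t))"

definition kernel :: "nat \<Rightarrow> (nat \<Rightarrow> real) \<Rightarrow> (nat \<Rightarrow> real) \<Rightarrow> real \<Rightarrow> real" where
  "kernel N alpha b t = (\<Sum>j=1..N. alpha j * Kj b j t)"

definition Astar :: "nat \<Rightarrow> (nat \<Rightarrow> real) \<Rightarrow> (nat \<Rightarrow> real) \<Rightarrow> nat \<Rightarrow> nat \<Rightarrow> real" where
  "Astar N alpha b i j =
     (if i = 0 then
        (if j = 0 then - (\<Sum>k=1..N. alpha k) else if j = 1 then b 1 else 0)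
      else if i \<le> N then
        (if j = 0 then alpha i
         else if j = i then - b i
         else if j = i + 1 \<and> i < N then b (i + 1)
         else 0)
      else 0)"

end

(*
  Read A^* as a chain: state 0 sends mass to stage j at rate alpha_j, and stage j passes it on
  to stage j - 1 at rate b_j, stage 1 returning it to state 0.  Mass that entered stage m comes
  back after a sum of independent exponential times with rates b_1, ..., b_m, whose density is
  the hypoexponential density K_m; hence b_1 p_1 is the convolution of p_0 with K, and p_0 obeys
  the integro-differential equation of u.

  The proof goes the other way: from u we build the stage contents explicitly as sums of
  exponential convolutions e^(-b_i t) * u, check that together with u they solve p' = A^* p with
  the initial value (u0, 0, ..., 0), and conclude by uniqueness for linear ODEs (an energy
  estimate plus Gronwall).  The coefficients of these sums are partial-fraction weights, and the
  identities they satisfy come from the partial fraction expansion of 1 / prod_k (b_k - x).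
*)
theory Submission
  imports Defs
begin

definition pfrac_weight :: "('a \<Rightarrow> 'b::field) \<Rightarrow> 'a set \<Rightarrow> 'a \<Rightarrow> 'b" where
  "pfrac_weight b T i = (\<Prod>k\<in>T - {i}. 1 / (b k - b i))"

lemma pfrac_weight_insert_self:
  assumes "finite T" "a \<notin> T"
  shows "pfrac_weight b (insert a T) a = 1 / (\<Prod>k\<in>T. b k - b a)"
  using assms by (simp add: pfrac_weight_def prod_dividef)

lemma pfrac_weight_insert:
  assumes "finite T" "a \<notin> T" "i \<in> T"
  shows "pfrac_weight b (insert a T) i = pfrac_weight b T i / (b a - b i)"
proof -
  have "insert a T - {i} = insert a (T - {i})" using assms by auto
  then show ?thesis using assms by (simp add: pfrac_weight_def)
qed

lemma inverse_prod_partial_fractions: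
  fixes b :: "'a \<Rightarrow> 'b::field"
  assumes "finite T" "T \<noteq> {}" "inj_on b T" "x \<notin> b ` T"
  shows "1 / (\<Prod>k\<in>T. b k - x) = (\<Sum>i\<in>T. pfrac_weight b T i / (b i - x))"
  using assms
proof (induction T arbitrary: x rule: finite_ne_induct)
  case (singleton c)
  then show ?case by (simp add: pfrac_weight_def)
next
  case (insert a T)
  have inj: "inj_on b T" and ba: "b a \<notin> b ` T"
    using insert.prems insert.hyps by auto
  then have ba_bi: "b a \<noteq> b i" if "i \<in> T" for i
    using that by auto
  have "1 / (\<Prod>k\<in>insert a T. b k - x) = (1 / (\<Prod>k\<in>T. b k - x)) / (b a - x)"
    using insert.hyps by simp
  also have "\<dots> = (\<Sum>i\<in>T. pfrac_weight b T i / ((b i - x) * (b a - x)))"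
    using insert.IH[OF inj] insert.prems by (simp add: sum_divide_distrib)
  also have "\<dots> = (\<Sum>i\<in>T. pfrac_weight b T i / (b a - b i) / (b i - x)
      - pfrac_weight b T i / (b a - b i) / (b a - x))"
  proof (rule sum.cong[OF refl])
    fix i assume "i \<in> T"
    have "w / (y * z) = w / (z - y) / y - w / (z - y) / z"
      if "y \<noteq> 0" "z \<noteq> 0" "z \<noteq> y" for w y z :: 'b
      using that by (simp add: divide_simps) (simp add: algebra_simps)
    from this[where w = "pfrac_weight b T i" and y = "b i - x" and z = "b a - x"]
      \<open>i \<in> T\<close> insert.prems ba_bi
    show "pfrac_weight b T i / ((b i - x) * (b a - x)) = pfrac_weight b T i / (b a - b i) / (b i - x)
      - pfrac_weight b T i / (b a - b i) / (b a - x)"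
      by auto
  qed
  also have "\<dots> = (\<Sum>i\<in>T. pfrac_weight b (insert a T) i / (b i - x))
      - (\<Sum>i\<in>T. pfrac_weight b T i / (b a - b i)) / (b a - x)"
    using insert.hyps by (simp add: pfrac_weight_insert sum_subtractf sum_divide_distrib)
  also have "(\<Sum>i\<in>T. pfrac_weight b T i / (b a - b i))
      = - (\<Sum>i\<in>T. pfrac_weight b T i / (b i - b a))"
    by (simp add: sum_negf[symmetric] minus_divide_right)
  also have "(\<Sum>i\<in>T. pfrac_weight b T i / (b i - b a)) = pfrac_weight b (insert a T) a"
    using insert.IH[OF inj ba] insert.hyps by (simp add: pfrac_weight_insert_self)
  finally show ?case
    using insert.hyps by (simp add: add.commute)
qed

lemma sum_pfrac_weight_eq_0:
  fixes b :: "'a \<Rightarrow> 'b::field"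
  assumes "finite T" "card T \<ge> 2" "inj_on b T"
  shows "(\<Sum>i\<in>T. pfrac_weight b T i) = 0"
proof -
  obtain a where "a \<in> T"
    using assms(2) by fastforce
  define T' where "T' = T - {a}"
  have T: "T = insert a T'" "a \<notin> T'"
    using \<open>a \<in> T\<close> by (auto simp: T'_def)
  have "T' \<noteq> {}"
    using assms(2) T by auto
  have "finite T'" "inj_on b T'" "b a \<notin> b ` T'"
    using assms T by auto
  then have "1 / (\<Prod>k\<in>T'. b k - b a) = (\<Sum>i\<in>T'. pfrac_weight b T' i / (b i - b a))"
    using inverse_prod_partial_fractions \<open>T' \<noteq> {}\<close> by blast
  moreover have "(\<Sum>i\<in>T'. pfrac_weight b T' i / (b a - b i))
      = - (\<Sum>i\<in>T'. pfrac_weight b T' i / (b i - b a))"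
    by (simp add: sum_negf[symmetric] minus_divide_right)
  ultimately show ?thesis
    using T \<open>finite T'\<close> by (simp add: pfrac_weight_insert pfrac_weight_insert_self)
qed

text \<open>\<open>\<Sum>i=j..m. chain_coeff b j m i * exp (- b i * t)\<close> is the convolution of \<open>exp (- b j * t)\<close>
  with the densities \<open>b k * exp (- b k * t)\<close>, \<open>k = j+1..m\<close>: the content of stage \<open>j\<close> at time \<open>t\<close>
  after a unit mass entered stage \<open>m\<close>.\<close>

definition chain_coeff :: "(nat \<Rightarrow> 'a::field) \<Rightarrow> nat \<Rightarrow> nat \<Rightarrow> nat \<Rightarrow> 'a" where
  "chain_coeff b j m i = (\<Prod>k\<in>{Suc j..m}. b k) * pfrac_weight b {j..m} i"

lemma chain_coeff_step:
  assumes "Suc j \<le> i" "i \<le> m" "inj_on b {j..m}"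
  shows "chain_coeff b j m i * (b i - b j) = - b (Suc j) * chain_coeff b (Suc j) m i"
proof -
  have "pfrac_weight b (insert j {Suc j..m}) i = pfrac_weight b {Suc j..m} i / (b j - b i)"
    using assms by (intro pfrac_weight_insert) auto
  moreover have "b j \<noteq> b i"
    using assms by (intro inj_on_contraD[of b "{j..m}"]) auto
  ultimately have "pfrac_weight b {j..m} i * (b i - b j) = - pfrac_weight b {Suc j..m} i"
    using assms by (simp add: Icc_eq_insert_lb_nat[symmetric] field_simps)
  then show ?thesis
    using assms by (simp add: chain_coeff_def prod.atLeast_Suc_atMost mult.assoc)
qed

lemma sum_chain_coeff:
  assumes "j \<le> m" "inj_on b {j..m}"
  shows "(\<Sum>i=j..m. chain_coeff b j m i) = (if m = j then 1 else 0)"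
proof (cases "m = j")
  case True
  then show ?thesis by (simp add: chain_coeff_def pfrac_weight_def)
next
  case False
  then have "card {j..m} \<ge> 2"
    using assms by simp
  then have "(\<Sum>i=j..m. pfrac_weight b {j..m} i) = 0"
    using sum_pfrac_weight_eq_0 assms(2) by blast
  then show ?thesis
    using False by (simp add: chain_coeff_def sum_distrib_left[symmetric])
qed

lemma chain_coeff_1_eq_psi:
  assumes "1 \<le> i" "i \<le> m"
  shows "b 1 * chain_coeff b 1 m i = b i * psi b i m"
proof -
  have "b 1 * (\<Prod>k\<in>{Suc 1..m}. b k) = (\<Prod>k\<in>{1..m}. b k)"
    using assms by (simp add: prod.atLeast_Suc_atMost)
  also have "\<dots> = b i * (\<Prod>k\<in>{1..m} - {i}. b k)"
    using assms by (simp add: prod.remove)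
  moreover have "psi b i m = (\<Prod>k\<in>{1..m} - {i}. b k) * pfrac_weight b {1..m} i"
    by (simp add: psi_def pfrac_weight_def prod.distrib[symmetric])
  ultimately show ?thesis
    by (simp add: chain_coeff_def mult.assoc)
qed

definition chain_sum :: "nat \<Rightarrow> (nat \<Rightarrow> 'a::field) \<Rightarrow> (nat \<Rightarrow> 'a) \<Rightarrow> (nat \<Rightarrow> 'a) \<Rightarrow> nat \<Rightarrow> 'a" where
  "chain_sum N alpha b X j = (\<Sum>m=j..N. alpha m * (\<Sum>i=j..m. chain_coeff b j m i * X i))"

lemma chain_sum_diff:
  "chain_sum N alpha b (\<lambda>i. X i - Y i) j = chain_sum N alpha b X j - chain_sum N alpha b Y j"
  by (simp add: chain_sum_def algebra_simps sum_subtractf)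

lemma chain_sum_const:
  assumes "j \<le> N" "inj_on b {j..N}"
  shows "chain_sum N alpha b (\<lambda>_. c) j = c * alpha j"
proof -
  have "chain_sum N alpha b (\<lambda>_. c) j = (\<Sum>m=j..N. alpha m * (\<Sum>i=j..m. chain_coeff b j m i) * c)"
    by (simp add: chain_sum_def sum_distrib_right[symmetric] mult.assoc)
  also have "\<dots> = (\<Sum>m=j..N. if m = j then alpha j * c else 0)"
    by (intro sum.cong refl) (simp add: sum_chain_coeff inj_on_subset[OF assms(2)])
  finally show ?thesis
    using assms by simp
qed

lemma chain_sum_mult_rates:
  assumes "j \<le> N" "inj_on b {j..N}"
  shows "chain_sum N alpha b (\<lambda>i. b i * X i) j
    = b j * chain_sum N alpha b X j - b (Suc j) * chain_sum N alpha b X (Suc j)"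
proof -
  have "chain_sum N alpha b (\<lambda>i. b i * X i) j - b j * chain_sum N alpha b X j
      = (\<Sum>m=j..N. alpha m * (\<Sum>i=j..m. chain_coeff b j m i * (b i - b j) * X i))"
    by (simp add: chain_sum_def algebra_simps sum_subtractf sum_distrib_left)
  also have "\<dots> = (\<Sum>m=Suc j..N. alpha m * (\<Sum>i=Suc j..m. chain_coeff b j m i * (b i - b j) * X i))"
    using assms by (simp add: sum.atLeast_Suc_atMost)
  also have "\<dots> = (\<Sum>m=Suc j..N. alpha m * (\<Sum>i=Suc j..m. - b (Suc j) * chain_coeff b (Suc j) m i * X i))"
    by (intro sum.cong refl) (simp add: chain_coeff_step inj_on_subset[OF assms(2)])
  also have "\<dots> = - b (Suc j) * chain_sum N alpha b X (Suc j)"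
    by (simp add: chain_sum_def sum_distrib_left sum_negf algebra_simps)
  finally show ?thesis
    by (simp add: algebra_simps)
qed

lemma gronwall_exp_bound:
  fixes f f' :: "real \<Rightarrow> real"
  assumes "0 \<le> T"
    and f': "\<And>t. t \<in> {0..T} \<Longrightarrow> (f has_real_derivative f' t) (at t within {0..T})"
    and le: "\<And>t. t \<in> {0..T} \<Longrightarrow> f' t \<le> c * f t"
  shows "f T \<le> exp (c * T) * f 0"
proof -
  define F where "F t = exp (- c * t) * f t" for t
  have F': "(F has_derivative (\<lambda>h. exp (- c * t) * (f' t - c * f t) * h)) (at t within {0..T})"
    if "t \<in> {0..T}" for t
  proof -
    have "(F has_real_derivative exp (- c * t) * (f' t - c * f t)) (at t within {0..T})"
      unfolding F_def by (rule derivative_eq_intros refl f' that)+ (simp add: algebra_simps)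
    then show ?thesis
      by (simp add: has_field_derivative_def)
  qed
  obtain t where "t \<in> {0..T}" "F T - F 0 = exp (- c * t) * (f' t - c * f t) * (T - 0)"
    using mvt_very_simple[OF \<open>0 \<le> T\<close> F'] by auto
  moreover have "exp (- c * t) * (f' t - c * f t) * (T - 0) \<le> 0"
    using le[OF \<open>t \<in> {0..T}\<close>] \<open>0 \<le> T\<close> by (intro mult_nonpos_nonneg mult_nonneg_nonpos) auto
  ultimately have "F T \<le> F 0"
    by linarith
  then show ?thesis
    by (simp add: F_def exp_minus field_simps)
qed

lemma quadratic_form_le:
  fixes A :: "'i \<Rightarrow> 'i \<Rightarrow> real"
  assumes "finite I"
  shows "(\<Sum>i\<in>I. \<Sum>k\<in>I. A i k * x i * x k) \<le> (\<Sum>i\<in>I. \<Sum>k\<in>I. \<bar>A i k\<bar>) * (\<Sum>i\<in>I. (x i)\<^sup>2)"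
proof -
  have prod_le: "\<bar>x i * x k\<bar> \<le> (\<Sum>i\<in>I. (x i)\<^sup>2)" if "i \<in> I" "k \<in> I" for i k
  proof -
    have "2 * \<bar>x i\<bar> * \<bar>x k\<bar> \<le> (x i)\<^sup>2 + (x k)\<^sup>2"
      using sum_squares_bound[of "\<bar>x i\<bar>" "\<bar>x k\<bar>"] by simp
    moreover have "(x i)\<^sup>2 \<le> (\<Sum>i\<in>I. (x i)\<^sup>2)" "(x k)\<^sup>2 \<le> (\<Sum>i\<in>I. (x i)\<^sup>2)"
      using that assms by (auto intro: member_le_sum)
    ultimately show ?thesis
      by (simp add: abs_mult)
  qed
  have "A i k * x i * x k \<le> \<bar>A i k\<bar> * (\<Sum>i\<in>I. (x i)\<^sup>2)" if "i \<in> I" "k \<in> I" for i k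
  proof -
    have "A i k * x i * x k \<le> \<bar>A i k\<bar> * \<bar>x i * x k\<bar>"
      by (metis abs_ge_self abs_mult mult.assoc)
    also have "\<dots> \<le> \<bar>A i k\<bar> * (\<Sum>i\<in>I. (x i)\<^sup>2)"
      using prod_le[OF that] by (rule mult_left_mono) simp
    finally show ?thesis .
  qed
  then show ?thesis
    by (simp add: sum_distrib_right sum_mono)
qed

lemma linear_ode_zero_unique:
  fixes w :: "nat \<Rightarrow> real \<Rightarrow> real" and A :: "nat \<Rightarrow> nat \<Rightarrow> real"
  assumes "0 \<le> T"
    and w': "\<And>i t. i \<le> N \<Longrightarrow> t \<in> {0..T} \<Longrightarrow>
       (w i has_real_derivative (\<Sum>k\<le>N. A i k * w k t)) (at t within {0..T})"
    and w0: "\<And>i. i \<le> N \<Longrightarrow> w i 0 = 0"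
    and "i \<le> N"
  shows "w i T = 0"
proof -
  define E where "E t = (\<Sum>i\<le>N. (w i t)\<^sup>2)" for t
  define C where "C = (\<Sum>i\<le>N. \<Sum>k\<le>N. \<bar>A i k\<bar>)"
  have "(E has_real_derivative 2 * (\<Sum>i\<le>N. \<Sum>k\<le>N. A i k * w i t * w k t)) (at t within {0..T})"
    if "t \<in> {0..T}" for t
    unfolding E_def
    by (rule derivative_eq_intros refl w' that | simp)+
      (simp add: sum_distrib_left sum_distrib_right mult_ac)
  moreover have "2 * (\<Sum>i\<le>N. \<Sum>k\<le>N. A i k * w i t * w k t) \<le> 2 * C * E t" for t
    using quadratic_form_le[of "{..N}" A "\<lambda>i. w i t"] by (simp add: C_def E_def)
  ultimately have "E T \<le> exp (2 * C * T) * E 0"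
    by (rule gronwall_exp_bound[OF \<open>0 \<le> T\<close>])
  also have "E 0 = 0"
    using w0 by (simp add: E_def)
  finally have "E T \<le> 0"
    by simp
  moreover have "(w i T)\<^sup>2 \<le> E T"
    using \<open>i \<le> N\<close> unfolding E_def by (intro member_le_sum) auto
  ultimately have "(w i T)\<^sup>2 \<le> 0"
    by linarith
  then show ?thesis
    by simp
qed

lemma Astar_row0_sum:
  assumes "1 \<le> N"
  shows "(\<Sum>k\<le>N. Astar N alpha b 0 k * f k) = - (\<Sum>k=1..N. alpha k) * f 0 + b 1 * f 1"
proof -
  have "(\<Sum>k\<le>N. Astar N alpha b 0 k * f k) =
      (\<Sum>k\<le>N. (if k = 0 then - (\<Sum>k=1..N. alpha k) * f 0 else 0) + (if k = 1 then b 1 * f 1 else 0))"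
    by (rule sum.cong) (auto simp: Astar_def)
  also have "\<dots> = - (\<Sum>k=1..N. alpha k) * f 0 + b 1 * f 1"
    using assms by (simp add: sum.distrib)
  finally show ?thesis .
qed

lemma Astar_row_sum:
  assumes "1 \<le> j" "j \<le> N"
  shows "(\<Sum>k\<le>N. Astar N alpha b j k * f k)
    = alpha j * f 0 - b j * f j + (if j < N then b (Suc j) * f (Suc j) else 0)"
proof -
  have "(\<Sum>k\<le>N. Astar N alpha b j k * f k) =
      (\<Sum>k\<le>N. (if k = 0 then alpha j * f 0 else 0) + (if k = j then - b j * f j else 0)
        + (if j < N \<and> k = Suc j then b (Suc j) * f (Suc j) else 0))"
    by (rule sum.cong) (use assms in \<open>auto simp: Astar_def\<close>)
  also have "\<dots> = alpha j * f 0 - b j * f j + (if j < N then b (Suc j) * f (Suc j) else 0)"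
    using assms by (simp add: sum.distrib)
  finally show ?thesis .
qed

lemma markov_generator_transpose_Astar:
  assumes "N \<ge> 1" "\<forall>j\<in>{1..N}. alpha j \<ge> 0" "\<forall>j\<in>{1..N}. b j > 0"
  shows "markov_generator N (\<lambda>i j. Astar N alpha b j i)"
  unfolding markov_generator_def
proof (intro conjI allI impI)
  fix i j assume "i \<le> N" "j \<le> N" "i \<noteq> j"
  then show "0 \<le> Astar N alpha b j i"
    using assms by (auto simp: Astar_def less_imp_le)
next
  fix i assume "i \<le> N"
  show "(\<Sum>j\<le>N. Astar N alpha b j i) = 0"
  proof (cases "i = 0")
    case True
    have "(\<Sum>j\<le>N. Astar N alpha b j 0) = Astar N alpha b 0 0 + (\<Sum>j=1..N. Astar N alpha b j 0)"
      by (simp add: atMost_atLeast0 sum.atLeast_Suc_atMost)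
    also have "(\<Sum>j=1..N. Astar N alpha b j 0) = (\<Sum>j=1..N. alpha j)"
      by (rule sum.cong) (auto simp: Astar_def)
    finally show ?thesis
      using True by (simp add: Astar_def)
  next
    case False
    have "(\<Sum>j\<le>N. Astar N alpha b j i) =
        (\<Sum>j\<le>N. (if j = i - 1 then b i else 0) + (if j = i then - b i else 0))"
      by (rule sum.cong) (use False \<open>i \<le> N\<close> in \<open>auto simp: Astar_def\<close>)
    also have "\<dots> = 0"
      using False \<open>i \<le> N\<close> by (simp add: sum.distrib)
    finally show ?thesis .
  qed
qed

definition exp_conv :: "real \<Rightarrow> (real \<Rightarrow> real) \<Rightarrow> real \<Rightarrow> real" where
  "exp_conv \<beta> u x = integral {0..x} (\<lambda>s. exp (- \<beta> * (x - s)) * u s)"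

lemma exp_conv_0: "exp_conv \<beta> u 0 = 0"
  by (simp add: exp_conv_def)

lemma exp_conv_has_real_derivative:
  assumes "continuous_on {0..T} u" "x \<in> {0..T}"
  shows "(exp_conv \<beta> u has_real_derivative u x - \<beta> * exp_conv \<beta> u x) (at x within {0..T})"
proof -
  define I where "I x = integral {0..x} (\<lambda>s. exp (\<beta> * s) * u s)" for x
  have shift: "exp (- \<beta> * (x - s)) * u s = exp (- \<beta> * x) * (exp (\<beta> * s) * u s)" for x s
    by (simp add: exp_add[symmetric] algebra_simps)
  have eq: "exp_conv \<beta> u = (\<lambda>x. exp (- \<beta> * x) * I x)"
    unfolding exp_conv_def I_def shift by simp
  have "(I has_real_derivative exp (\<beta> * x) * u x) (at x within {0..T})"
    unfolding I_def using assms by (intro integral_has_real_derivative continuous_intros)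
  then have "(exp_conv \<beta> u has_real_derivative
      exp (- \<beta> * x) * (exp (\<beta> * x) * u x) - \<beta> * exp (- \<beta> * x) * I x) (at x within {0..T})"
    unfolding eq by (auto intro!: derivative_eq_intros)
  then show ?thesis
    by (simp add: eq mult.assoc[symmetric] exp_add[symmetric])
qed

lemma integral_kernel_conv:
  assumes "continuous_on {0..x} u"
  shows "integral {0..x} (\<lambda>s. kernel N alpha b (x - s) * u s)
    = b 1 * chain_sum N alpha b (\<lambda>i. exp_conv (b i) u x) 1"
proof -
  have "(\<lambda>s. kernel N alpha b (x - s) * u s)
      = (\<lambda>s. \<Sum>m=1..N. \<Sum>i=1..m. alpha m * (b i * psi b i m) * (exp (- b i * (x - s)) * u s))"
    by (simp add: kernel_def Kj_def sum_distrib_left sum_distrib_right mult_ac)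
  moreover have "((\<lambda>s. \<Sum>m=1..N. \<Sum>i=1..m. alpha m * (b i * psi b i m) * (exp (- b i * (x - s)) * u s))
      has_integral (\<Sum>m=1..N. \<Sum>i=1..m. alpha m * (b i * psi b i m) * exp_conv (b i) u x)) {0..x}"
    unfolding exp_conv_def using assms
    by (intro has_integral_sum finite_atLeastAtMost has_integral_mult_right integrable_integral
        integrable_continuous_interval continuous_intros)
  ultimately have "integral {0..x} (\<lambda>s. kernel N alpha b (x - s) * u s)
      = (\<Sum>m=1..N. \<Sum>i=1..m. alpha m * (b i * psi b i m) * exp_conv (b i) u x)"
    by (simp add: integral_unique)
  also have "\<dots> = b 1 * chain_sum N alpha b (\<lambda>i. exp_conv (b i) u x) 1"
    unfolding chain_sum_def sum_distrib_left
  proof (intro sum.cong refl)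
    fix m i :: nat assume "i \<in> {1..m}"
    then have "b i * psi b i m = b 1 * chain_coeff b 1 m i"
      by (intro chain_coeff_1_eq_psi[symmetric]) auto
    then show "alpha m * (b i * psi b i m) * exp_conv (b i) u x
        = b 1 * (alpha m * (chain_coeff b 1 m i * exp_conv (b i) u x))"
      by (simp add: mult_ac)
  qed
  finally show ?thesis .
qed

definition chain_solution ::
    "nat \<Rightarrow> (nat \<Rightarrow> real) \<Rightarrow> (nat \<Rightarrow> real) \<Rightarrow> (real \<Rightarrow> real) \<Rightarrow> nat \<Rightarrow> real \<Rightarrow> real" where
  "chain_solution N alpha b u j x =
     (if j = 0 then u x else chain_sum N alpha b (\<lambda>i. exp_conv (b i) u x) j)"

lemma chain_solution_at_0: "chain_solution N alpha b u j 0 = (if j = 0 then u 0 else 0)"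
  unfolding chain_solution_def chain_sum_def exp_conv_0 by simp

lemma chain_solution_has_real_derivative:
  assumes "1 \<le> N" "inj_on b {1..N}" "continuous_on {0..T} u" "x \<in> {0..T}" "j \<le> N"
    and u': "(u has_real_derivative - (\<Sum>j=1..N. alpha j) * u x
      + integral {0..x} (\<lambda>s. kernel N alpha b (x - s) * u s)) (at x within {0..T})"
  shows "(chain_solution N alpha b u j has_real_derivative
      (\<Sum>k\<le>N. Astar N alpha b j k * chain_solution N alpha b u k x)) (at x within {0..T})"
proof (cases "j = 0")
  case True
  have "continuous_on {0..x} u"
    using assms by (auto intro: continuous_on_subset)
  then have "integral {0..x} (\<lambda>s. kernel N alpha b (x - s) * u s) = b 1 * chain_solution N alpha b u 1 x"
    by (simp add: integral_kernel_conv chain_solution_def)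
  moreover have "chain_solution N alpha b u 0 = u"
    by (simp add: chain_solution_def [abs_def])
  ultimately show ?thesis
    using u' True by (simp add: Astar_row0_sum[OF \<open>1 \<le> N\<close>])
next
  case False
  define X where "X x = (\<lambda>i. exp_conv (b i) u x)" for x
  have "inj_on b {j..N}"
    using assms False by (auto intro: inj_on_subset)
  have "((\<lambda>x. chain_sum N alpha b (X x) j) has_real_derivative
      chain_sum N alpha b (\<lambda>i. u x - b i * X x i) j) (at x within {0..T})"
    unfolding chain_sum_def X_def by (intro DERIV_sum DERIV_cmult exp_conv_has_real_derivative assms)
  moreover have "chain_sum N alpha b (\<lambda>i. u x - b i * X x i) j
      = alpha j * u x - b j * chain_sum N alpha b (X x) j + b (Suc j) * chain_sum N alpha b (X x) (Suc j)"
    using \<open>j \<le> N\<close> \<open>inj_on b {j..N}\<close>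
    by (simp add: chain_sum_diff chain_sum_const chain_sum_mult_rates mult.commute)
  \<comment> \<open>for \<open>j = N\<close> the \<open>Suc j\<close> term is an empty sum, matching the missing entry of \<open>A\<^sup>*\<close>\<close>
  moreover have "\<dots> = (\<Sum>k\<le>N. Astar N alpha b j k * chain_solution N alpha b u k x)"
    using False assms by (simp add: Astar_row_sum chain_solution_def X_def chain_sum_def)
  ultimately show ?thesis
    using False by (simp add: chain_solution_def [abs_def] X_def)
qed

lemma chain_solution_solves_ode:
  assumes "1 \<le> N" "inj_on b {1..N}" "0 \<le> T"
    and u': "\<forall>t\<ge>0. (u has_real_derivative
        (- (\<Sum>j=1..N. alpha j) * u t + integral {0..t} (\<lambda>s. kernel N alpha b (t - s) * u s)))
        (at t within {0..})"
    and "i \<le> N" "t \<in> {0..T}"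
  shows "(chain_solution N alpha b u i has_real_derivative
      (\<Sum>k\<le>N. Astar N alpha b i k * chain_solution N alpha b u k t)) (at t within {0..T})"
proof -
  have u'_T: "(u has_real_derivative - (\<Sum>j=1..N. alpha j) * u x
      + integral {0..x} (\<lambda>s. kernel N alpha b (x - s) * u s)) (at x within {0..T})" if "x \<in> {0..T}" for x
  proof (rule DERIV_subset)
    show "(u has_real_derivative - (\<Sum>j=1..N. alpha j) * u x
        + integral {0..x} (\<lambda>s. kernel N alpha b (x - s) * u s)) (at x within {0..})"
      using u' that by simp
  qed auto
  then have "continuous_on {0..T} u"
    unfolding continuous_on_eq_continuous_within using DERIV_continuous by blast
  with assms u'_T[OF \<open>t \<in> {0..T}\<close>] show ?thesis
    by (intro chain_solution_has_real_derivative)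
qed

theorem theorem3p3:
  fixes N :: nat and alpha b :: "nat \<Rightarrow> real" and u :: "real \<Rightarrow> real" and u0 :: real
  assumes N: "N \<ge> 1"
    and alpha_nonneg: "\<forall>j\<in>{1..N}. alpha j \<ge> 0"
    and b_pos: "\<forall>j\<in>{1..N}. b j > 0"
    and b_distinct: "inj_on b {1..N}"
    and u_ode: "\<forall>t\<ge>0. (u has_real_derivative
        (- (\<Sum>j=1..N. alpha j) * u t + integral {0..t} (\<lambda>s. kernel N alpha b (t - s) * u s)))
        (at t within {0..})"
    and u_init: "u 0 = u0"
  shows "markov_generator N (\<lambda>i j. Astar N alpha b j i) \<and>
    (\<forall>p :: nat \<Rightarrow> real \<Rightarrow> real.
       (\<forall>i\<le>N. \<forall>t\<ge>0. (p i has_real_derivative (\<Sum>k\<le>N. Astar N alpha b i k * p k t))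
                        (at t within {0..})) \<and>
       (\<forall>i\<le>N. p i 0 = (if i = 0 then u0 else 0))
       \<longrightarrow> (\<forall>t\<ge>0. p 0 t = u t))"
proof (intro conjI allI impI)
  show "markov_generator N (\<lambda>i j. Astar N alpha b j i)"
    using N alpha_nonneg b_pos by (rule markov_generator_transpose_Astar)
next
  fix p :: "nat \<Rightarrow> real \<Rightarrow> real" and T :: real
  assume p: "(\<forall>i\<le>N. \<forall>t\<ge>0. (p i has_real_derivative (\<Sum>k\<le>N. Astar N alpha b i k * p k t))
      (at t within {0..})) \<and> (\<forall>i\<le>N. p i 0 = (if i = 0 then u0 else 0))"
    and "0 \<le> T"
  let ?v = "chain_solution N alpha b u"
  have "p 0 T - ?v 0 T = 0"
  proof (rule linear_ode_zero_unique[OF \<open>0 \<le> T\<close>, where A = "Astar N alpha b"])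
    fix i t assume "i \<le> N" "t \<in> {0..T}"
    then have "(p i has_real_derivative (\<Sum>k\<le>N. Astar N alpha b i k * p k t)) (at t within {0..})"
      using p by simp
    then have p': "(p i has_real_derivative (\<Sum>k\<le>N. Astar N alpha b i k * p k t)) (at t within {0..T})"
      by (rule DERIV_subset) auto
    have v': "(?v i has_real_derivative (\<Sum>k\<le>N. Astar N alpha b i k * ?v k t)) (at t within {0..T})"
      using N b_distinct \<open>0 \<le> T\<close> u_ode \<open>i \<le> N\<close> \<open>t \<in> {0..T}\<close> by (rule chain_solution_solves_ode)
    from DERIV_diff[OF p' v'] show "((\<lambda>t. p i t - ?v i t) has_real_derivative
        (\<Sum>k\<le>N. Astar N alpha b i k * (p k t - ?v k t))) (at t within {0..T})"
      by (simp add: sum_subtractf right_diff_distrib)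
  next
    fix i assume "i \<le> N"
    then show "p i 0 - ?v i 0 = 0"
      using p u_init by (simp add: chain_solution_at_0)
  qed simp
  then show "p 0 T = u T"
    by (simp add: chain_solution_def)
qed

end
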